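(* Let $T>0$, $\xi\in C^{1+\beta}([0,T])$ with $\beta>1/2$, and $f\in C^{1/2}([0,T])$. For $0\le s<t\le T$ let $$K(t,s)=\frac{\xi(t)-\xi(s)}{t-s}\,\frac{e^{-\frac{(\xi(t)-\xi(s))^2}{4(t-s)}}}{(t-s)^{1/2}},$$ and define $g(t)=\int_0^tK(t,s)f(s)\,ds$ for $t\in[0,T]$. Then $g\in C^{1/2}([0,T])$. *)

theory Defs
  imports "HOL-Analysis.Analysis"
begin

text \<open>Hoelder space C^alpha(S) for 0 < alpha: functions on S with finite
  alpha-Hoelder seminorm (on a compact interval this implies continuity and boundedness).\<close>
definition holder_on :: "real \<Rightarrow> real set \<Rightarrow> (real \<Rightarrow> real) \<Rightarrow> bool" where
  "holder_on \<alpha> S f \<longleftrightarrow> (\<exists>C. \<forall>x\<in>S. \<forall>y\<in>S. \<bar>f x - f y\<bar> \<le> C * \<bar>x - y\<bar> powr \<alpha>)"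

definition C1_holder_on :: "real \<Rightarrow> real set \<Rightarrow> (real \<Rightarrow> real) \<Rightarrow> bool" where
  "C1_holder_on \<beta> S f \<longleftrightarrow>
     (\<exists>f'. (\<forall>t\<in>S. (f has_real_derivative f' t) (at t within S)) \<and> holder_on \<beta> S f')"

text \<open>The kernel K(t,s), meant for s < t.\<close>
definition kernelK :: "(real \<Rightarrow> real) \<Rightarrow> real \<Rightarrow> real \<Rightarrow> real" where
  "kernelK \<xi> t s = (\<xi> t - \<xi> s) / (t - s) *
      (exp (- ((\<xi> t - \<xi> s)^2 / (4 * (t - s)))) / (t - s) powr (1/2))"

end

theory Submission
  imports Defs
begin

text \<open>Write K(t,s) = \<phi>(q(t,s), t - s) / sqrt (t - s) with q(t,s) = (\<xi> t - \<xi> s) / (t - s) and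
  \<phi>(q,r) = q exp (- q^2 r / 4). By the mean value theorem q is bounded, and since \<xi>' is
  1/2-Hoelder (only \<beta> \<ge> 1/2 is needed), q(\<cdot>,s) is 1/2-Hoelder in t uniformly in s; \<phi> is
  Lipschitz on bounded sets. Hence, for s < t' < t,
    \<bar>K(t,s)\<bar> \<le> A (t - s)^(-1/2),
    \<bar>K(t,s) - K(t',s)\<bar> \<le> L (t - t')^(1/2) (t - s)^(-1/2) + A ((t' - s)^(-1/2) - (t - s)^(-1/2)),
  and multiplying K by the bounded function f preserves these bounds. For such a kernel,
  g(t) - g(t') is the integral of K(t,\<cdot>) f over [t', t], which is O((t - t')^(1/2)), plus the
  integral of the difference over [0, t'], whose bound integrates to O((t - t')^(1/2)) because its
  second term telescopes.\<close>

section \<open>Hoelder continuous functions\<close>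

lemma holder_on_nonneg_constant:
  "holder_on \<alpha> S f \<longleftrightarrow> (\<exists>C\<ge>0. \<forall>x\<in>S. \<forall>y\<in>S. \<bar>f x - f y\<bar> \<le> C * \<bar>x - y\<bar> powr \<alpha>)"
proof
  assume "holder_on \<alpha> S f"
  then obtain C where C: "\<forall>x\<in>S. \<forall>y\<in>S. \<bar>f x - f y\<bar> \<le> C * \<bar>x - y\<bar> powr \<alpha>"
    unfolding holder_on_def by blast
  have "\<bar>f x - f y\<bar> \<le> max C 0 * \<bar>x - y\<bar> powr \<alpha>" if "x \<in> S" "y \<in> S" for x y
    using C that by (intro order_trans[OF _ mult_right_mono[OF max.cobounded1 powr_ge_zero]]) blast
  then show "\<exists>C\<ge>0. \<forall>x\<in>S. \<forall>y\<in>S. \<bar>f x - f y\<bar> \<le> C * \<bar>x - y\<bar> powr \<alpha>"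
    by (intro exI[of _ "max C 0"]) auto
qed (auto simp: holder_on_def)

lemma holder_onI_ordered:
  assumes "\<And>x y. x \<in> S \<Longrightarrow> y \<in> S \<Longrightarrow> x < y \<Longrightarrow> \<bar>g y - g x\<bar> \<le> C * (y - x) powr \<alpha>"
  shows "holder_on \<alpha> S g"
  unfolding holder_on_def
proof (intro exI ballI)
  fix x y assume xy: "x \<in> S" "y \<in> S"
  consider "x < y" | "x = y" | "y < x" by linarith
  then show "\<bar>g x - g y\<bar> \<le> C * \<bar>x - y\<bar> powr \<alpha>"
  proof cases
    case 1
    then show ?thesis using assms[OF xy 1] by (simp add: abs_minus_commute[of x] abs_minus_commute[of "g x"])
  next
    case 3
    then show ?thesis using assms[OF xy(2,1) 3] by simp
  qed simp
qed

lemma holder_on_exponent_mono: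
  assumes "holder_on \<beta> S f" "\<alpha> \<le> \<beta>" "S \<subseteq> {a..b}"
  shows "holder_on \<alpha> S f"
proof -
  obtain C where "C \<ge> 0" and C: "\<forall>x\<in>S. \<forall>y\<in>S. \<bar>f x - f y\<bar> \<le> C * \<bar>x - y\<bar> powr \<beta>"
    using assms(1) by (auto simp: holder_on_nonneg_constant)
  have "\<bar>f x - f y\<bar> \<le> C * (b - a) powr (\<beta> - \<alpha>) * \<bar>x - y\<bar> powr \<alpha>" if "x \<in> S" "y \<in> S" for x y
  proof -
    have "\<bar>x - y\<bar> powr \<beta> = \<bar>x - y\<bar> powr (\<beta> - \<alpha>) * \<bar>x - y\<bar> powr \<alpha>"
      by (simp flip: powr_add)
    also have "\<dots> \<le> (b - a) powr (\<beta> - \<alpha>) * \<bar>x - y\<bar> powr \<alpha>"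
      using assms(2) subsetD[OF assms(3) that(1)] subsetD[OF assms(3) that(2)]
      by (intro mult_right_mono powr_mono2) auto
    finally have "C * \<bar>x - y\<bar> powr \<beta> \<le> C * ((b - a) powr (\<beta> - \<alpha>) * \<bar>x - y\<bar> powr \<alpha>)"
      using \<open>C \<ge> 0\<close> by (rule mult_left_mono)
    with C that show ?thesis
      unfolding mult.assoc by (meson order_trans)
  qed
  then show ?thesis unfolding holder_on_def by blast
qed

lemma holder_on_bounded:
  assumes "holder_on \<alpha> S f" "0 \<le> \<alpha>" "S \<subseteq> {a..b}" "x\<^sub>0 \<in> S"
  obtains B where "\<And>x. x \<in> S \<Longrightarrow> \<bar>f x\<bar> \<le> B"
proof -
  obtain C where "C \<ge> 0" and C: "\<forall>x\<in>S. \<forall>y\<in>S. \<bar>f x - f y\<bar> \<le> C * \<bar>x - y\<bar> powr \<alpha>"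
    using assms(1) by (auto simp: holder_on_nonneg_constant)
  have "\<bar>f x\<bar> \<le> \<bar>f x\<^sub>0\<bar> + C * (b - a) powr \<alpha>" if x: "x \<in> S" for x
  proof -
    have "\<bar>f x - f x\<^sub>0\<bar> \<le> C * \<bar>x - x\<^sub>0\<bar> powr \<alpha>" using C x assms(4) by blast
    also have "\<dots> \<le> C * (b - a) powr \<alpha>"
      using assms(2) subsetD[OF assms(3) x] subsetD[OF assms(3,4)] \<open>C \<ge> 0\<close>
      by (intro mult_left_mono powr_mono2) auto
    finally show ?thesis by linarith
  qed
  then show ?thesis by (rule that)
qed

lemma holder_on_imp_continuous_on:
  assumes "0 < \<alpha>" "holder_on \<alpha> S f"
  shows "continuous_on S f"
proof -
  obtain C where C: "\<And>x y. x \<in> S \<Longrightarrow> y \<in> S \<Longrightarrow> \<bar>f x - f y\<bar> \<le> C * \<bar>x - y\<bar> powr \<alpha>"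
    using assms(2) unfolding holder_on_def by blast
  show ?thesis
    unfolding continuous_on_def
  proof
    fix x assume x: "x \<in> S"
    have "((\<lambda>y. C * \<bar>y - x\<bar> powr \<alpha>) \<longlongrightarrow> C * \<bar>x - x\<bar> powr \<alpha>) (at x within S)"
      using assms(1) by (intro tendsto_intros) auto
    then have "((\<lambda>y. C * \<bar>y - x\<bar> powr \<alpha>) \<longlongrightarrow> 0) (at x within S)"
      by simp
    then have "((\<lambda>y. f y - f x) \<longlongrightarrow> 0) (at x within S)"
      by (rule Lim_null_comparison[rotated]) (auto simp: eventually_at_filter C x)
    then show "(f \<longlongrightarrow> f x) (at x within S)"
      by (simp add: LIM_zero_iff)
  qed
qed

section \<open>Difference quotients\<close>

lemma sqrt_mult_divide_self:
  fixes x u :: real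
  assumes "0 < x"
  shows "sqrt x * (u / x) = u / sqrt x"
  using assms by (smt (verit, del_insts) mult.commute nonzero_eq_divide_eq real_div_sqrt times_divide_eq_right)

definition difference_quotient :: "(real \<Rightarrow> real) \<Rightarrow> real \<Rightarrow> real \<Rightarrow> real" where
  "difference_quotient \<xi> t s = (\<xi> t - \<xi> s) / (t - s)"

lemma difference_quotient_mvt:
  assumes deriv: "\<And>x. x \<in> {a..b} \<Longrightarrow> (\<xi> has_real_derivative \<xi>' x) (at x within {a..b})"
    and "a \<le> s" "s < t" "t \<le> b"
  obtains c where "s < c" "c < t" "difference_quotient \<xi> t s = \<xi>' c"
proof -
  have "\<exists>c\<in>{s<..<t}. \<xi> t - \<xi> s = (\<lambda>h. \<xi>' c * h) (t - s)"
  proof (rule mvt_simple)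
    fix x assume "s \<le> x" "x \<le> t"
    then have "(\<xi> has_real_derivative \<xi>' x) (at x within {a..b})"
      using deriv assms by auto
    then have "(\<xi> has_real_derivative \<xi>' x) (at x within {s..t})"
      by (rule DERIV_subset) (use assms in auto)
    then show "(\<xi> has_derivative (\<lambda>h. \<xi>' x * h)) (at x within {s..t})"
      by (simp add: has_field_derivative_def)
  qed fact
  then show ?thesis
    using that \<open>s < t\<close> by (auto simp: difference_quotient_def)
qed

lemma abs_difference_quotient_le:
  assumes "\<And>x. x \<in> {a..b} \<Longrightarrow> (\<xi> has_real_derivative \<xi>' x) (at x within {a..b})"
    and "\<And>x. x \<in> {a..b} \<Longrightarrow> \<bar>\<xi>' x\<bar> \<le> M"
    and "a \<le> s" "s < t" "t \<le> b"
  shows "\<bar>difference_quotient \<xi> t s\<bar> \<le> M"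
proof -
  obtain c where "s < c" "c < t" "difference_quotient \<xi> t s = \<xi>' c"
    using difference_quotient_mvt[OF assms(1,3-5)] .
  then show ?thesis using assms(2)[of c] assms(3-5) by auto
qed

text \<open>By the mean value theorem the difference equals (\<xi>'(c) - \<xi>'(d)) (t - t') / (t - s) for some
  c in (t', t) and d in (s, t'); the factor (t - t') / (t - s) absorbs sqrt \<bar>c - d\<bar> \<le> sqrt (t - s).\<close>
lemma difference_quotient_holder:
  assumes deriv: "\<And>x. x \<in> {a..b} \<Longrightarrow> (\<xi> has_real_derivative \<xi>' x) (at x within {a..b})"
    and holder: "\<And>x y. x \<in> {a..b} \<Longrightarrow> y \<in> {a..b} \<Longrightarrow> \<bar>\<xi>' x - \<xi>' y\<bar> \<le> H * sqrt \<bar>x - y\<bar>"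
    and "0 \<le> H" and st: "a \<le> s" "s < t'" "t' < t" "t \<le> b"
  shows "\<bar>difference_quotient \<xi> t s - difference_quotient \<xi> t' s\<bar> \<le> H * sqrt (t - t')"
proof -
  obtain c where c: "t' < c" "c < t" "difference_quotient \<xi> t t' = \<xi>' c"
    using difference_quotient_mvt[OF deriv, of t' t] st by auto
  obtain d where d: "s < d" "d < t'" "difference_quotient \<xi> t' s = \<xi>' d"
    using difference_quotient_mvt[OF deriv, of s t'] st by auto
  have "difference_quotient \<xi> t s
      = (difference_quotient \<xi> t t' * (t - t') + difference_quotient \<xi> t' s * (t' - s)) / (t - s)"
    using st by (simp add: difference_quotient_def add_divide_distrib [symmetric])
  then have "difference_quotient \<xi> t s - difference_quotient \<xi> t' s = (\<xi>' c - \<xi>' d) * ((t - t') / (t - s))"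
    using st c d by (simp add: field_simps)
  also have "\<bar>\<dots>\<bar> = \<bar>\<xi>' c - \<xi>' d\<bar> * ((t - t') / (t - s))"
    using st by (simp add: abs_mult)
  also have "\<dots> \<le> H * sqrt (t - s) * ((t - t') / (t - s))"
  proof (rule mult_right_mono)
    have "\<bar>\<xi>' c - \<xi>' d\<bar> \<le> H * sqrt \<bar>c - d\<bar>"
      using st c d by (intro holder) auto
    also have "\<dots> \<le> H * sqrt (t - s)"
      using c d \<open>0 \<le> H\<close> by (intro mult_left_mono) auto
    finally show "\<bar>\<xi>' c - \<xi>' d\<bar> \<le> H * sqrt (t - s)" .
  qed (use st in simp)
  also have "\<dots> = H * (sqrt (t - s) * ((t - t') / (t - s)))"
    by (rule mult.assoc)
  also have "\<dots> = H * ((t - t') / sqrt (t - s))"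
    using st by (subst sqrt_mult_divide_self) auto
  also have "\<dots> \<le> H * ((t - t') / sqrt (t - t'))"
    using st \<open>0 \<le> H\<close> by (intro mult_left_mono divide_left_mono) auto
  also have "\<dots> = H * sqrt (t - t')"
    using st by (simp add: real_div_sqrt)
  finally show ?thesis .
qed

section \<open>The kernel\<close>

definition kernel_profile :: "real \<Rightarrow> real \<Rightarrow> real" where
  "kernel_profile q r = q * exp (- (q\<^sup>2 * r / 4))"

lemma kernelK_eq_kernel_profile:
  assumes "s < t"
  shows "kernelK \<xi> t s = kernel_profile (difference_quotient \<xi> t s) (t - s) / sqrt (t - s)"
proof -
  have "(a / d)\<^sup>2 * d / 4 = a\<^sup>2 / (4 * d)" if "d \<noteq> 0" for a d :: real
    using that by (simp add: power2_eq_square field_simps)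
  then have "(\<xi> t - \<xi> s)\<^sup>2 / (4 * (t - s)) = (difference_quotient \<xi> t s)\<^sup>2 * (t - s) / 4"
    using assms by (simp add: difference_quotient_def)
  then show ?thesis
    using assms by (simp add: kernelK_def kernel_profile_def difference_quotient_def powr_half_sqrt)
qed

lemma abs_kernel_profile_le:
  assumes "0 \<le> r"
  shows "\<bar>kernel_profile q r\<bar> \<le> \<bar>q\<bar>"
  using assms by (simp add: kernel_profile_def abs_mult mult_left_le)

lemma abs_exp_neg_diff_le:
  fixes a b :: real
  assumes "0 \<le> a" "0 \<le> b"
  shows "\<bar>exp (- a) - exp (- b)\<bar> \<le> \<bar>a - b\<bar>"
proof -
  have ordered: "exp (- y) - exp (- x) \<le> x - y" if "0 \<le> y" "y \<le> x" for x y :: real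
  proof -
    have "exp (- y) - exp (- x) = exp (- y) * (1 - exp (- (x - y)))"
      by (simp add: algebra_simps flip: exp_add)
    also have "\<dots> \<le> 1 - exp (- (x - y))"
      using that by (intro mult_left_le_one_le) auto
    also have "\<dots> \<le> x - y"
      using exp_ge_add_one_self[of "- (x - y)"] by linarith
    finally show ?thesis .
  qed
  show ?thesis
  proof (cases "b \<le> a")
    case True
    then show ?thesis using ordered[of b a] assms by simp
  next
    case False
    then show ?thesis using ordered[of a b] assms by simp
  qed
qed

lemma kernel_profile_diff_le:
  assumes "\<bar>q\<^sub>1\<bar> \<le> M" "\<bar>q\<^sub>2\<bar> \<le> M" "0 \<le> r\<^sub>2" "r\<^sub>2 \<le> r\<^sub>1" "r\<^sub>1 \<le> T"
  shows "\<bar>kernel_profile q\<^sub>1 r\<^sub>1 - kernel_profile q\<^sub>2 r\<^sub>2\<bar>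
     \<le> \<bar>q\<^sub>1 - q\<^sub>2\<bar> * (1 + M\<^sup>2 * T / 2) + M ^ 3 * (r\<^sub>1 - r\<^sub>2) / 4"
proof -
  define e\<^sub>1 where "e\<^sub>1 = exp (- (q\<^sub>1\<^sup>2 * r\<^sub>1 / 4))"
  define e\<^sub>2 where "e\<^sub>2 = exp (- (q\<^sub>2\<^sup>2 * r\<^sub>2 / 4))"
  have "0 \<le> M" using assms(1) by linarith
  have e\<^sub>1: "0 \<le> e\<^sub>1" "e\<^sub>1 \<le> 1" unfolding e\<^sub>1_def using assms by auto
  have "\<bar>e\<^sub>1 - e\<^sub>2\<bar> \<le> \<bar>q\<^sub>1\<^sup>2 * r\<^sub>1 / 4 - q\<^sub>2\<^sup>2 * r\<^sub>2 / 4\<bar>"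
    unfolding e\<^sub>1_def e\<^sub>2_def using assms by (intro abs_exp_neg_diff_le) auto
  also have "q\<^sub>1\<^sup>2 * r\<^sub>1 / 4 - q\<^sub>2\<^sup>2 * r\<^sub>2 / 4 = ((q\<^sub>1 - q\<^sub>2) * (q\<^sub>1 + q\<^sub>2) * r\<^sub>1 + q\<^sub>2\<^sup>2 * (r\<^sub>1 - r\<^sub>2)) / 4"
    by (simp add: algebra_simps power2_eq_square)
  also have "\<bar>\<dots>\<bar> = \<bar>(q\<^sub>1 - q\<^sub>2) * (q\<^sub>1 + q\<^sub>2) * r\<^sub>1 + q\<^sub>2\<^sup>2 * (r\<^sub>1 - r\<^sub>2)\<bar> / 4"
    by simp
  also have "\<dots> \<le> (\<bar>q\<^sub>1 - q\<^sub>2\<bar> * (2 * M) * T + M\<^sup>2 * (r\<^sub>1 - r\<^sub>2)) / 4"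
  proof -
    have "\<bar>(q\<^sub>1 - q\<^sub>2) * (q\<^sub>1 + q\<^sub>2) * r\<^sub>1\<bar> \<le> \<bar>q\<^sub>1 - q\<^sub>2\<bar> * (2 * M) * T"
      unfolding abs_mult using assms by (intro mult_mono) auto
    moreover have "\<bar>q\<^sub>2\<^sup>2 * (r\<^sub>1 - r\<^sub>2)\<bar> \<le> M\<^sup>2 * (r\<^sub>1 - r\<^sub>2)"
      using assms power_mono[OF assms(2), of 2] by (simp add: abs_mult mult_right_mono)
    ultimately show ?thesis by simp
  qed
  finally have e_diff: "\<bar>e\<^sub>1 - e\<^sub>2\<bar> \<le> (\<bar>q\<^sub>1 - q\<^sub>2\<bar> * (2 * M) * T + M\<^sup>2 * (r\<^sub>1 - r\<^sub>2)) / 4" .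
  have "\<bar>q\<^sub>1 * e\<^sub>1 - q\<^sub>2 * e\<^sub>2\<bar> = \<bar>(q\<^sub>1 - q\<^sub>2) * e\<^sub>1 + q\<^sub>2 * (e\<^sub>1 - e\<^sub>2)\<bar>"
    by (simp add: algebra_simps)
  also have "\<dots> \<le> \<bar>q\<^sub>1 - q\<^sub>2\<bar> * e\<^sub>1 + \<bar>q\<^sub>2\<bar> * \<bar>e\<^sub>1 - e\<^sub>2\<bar>"
    using e\<^sub>1 abs_triangle_ineq[of "(q\<^sub>1 - q\<^sub>2) * e\<^sub>1" "q\<^sub>2 * (e\<^sub>1 - e\<^sub>2)"] by (simp add: abs_mult)
  also have "\<dots> \<le> \<bar>q\<^sub>1 - q\<^sub>2\<bar> + M * ((\<bar>q\<^sub>1 - q\<^sub>2\<bar> * (2 * M) * T + M\<^sup>2 * (r\<^sub>1 - r\<^sub>2)) / 4)"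
    using e\<^sub>1 e_diff assms(2) \<open>0 \<le> M\<close>
    by (intro add_mono mult_mono) (auto simp: mult_left_le)
  also have "\<dots> = \<bar>q\<^sub>1 - q\<^sub>2\<bar> * (1 + M\<^sup>2 * T / 2) + M ^ 3 * (r\<^sub>1 - r\<^sub>2) / 4"
    by (simp add: field_simps power2_eq_square power3_eq_cube)
  finally show ?thesis
    unfolding kernel_profile_def e\<^sub>1_def e\<^sub>2_def .
qed

lemma abs_kernelK_le:
  assumes "s < t" "\<bar>difference_quotient \<xi> t s\<bar> \<le> M"
  shows "\<bar>kernelK \<xi> t s\<bar> \<le> M / sqrt (t - s)"
proof -
  have "\<bar>kernelK \<xi> t s\<bar> = \<bar>kernel_profile (difference_quotient \<xi> t s) (t - s)\<bar> / sqrt (t - s)"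
    using assms by (simp add: kernelK_eq_kernel_profile abs_div)
  also have "\<dots> \<le> M / sqrt (t - s)"
    using order_trans[OF abs_kernel_profile_le assms(2)] assms(1) by (intro divide_right_mono) auto
  finally show ?thesis .
qed

lemma abs_kernelK_diff_le:
  assumes "s < t'" "t' < t" "t - s \<le> T"
    and q: "\<bar>difference_quotient \<xi> t s\<bar> \<le> M" and q': "\<bar>difference_quotient \<xi> t' s\<bar> \<le> M"
    and qq': "\<bar>difference_quotient \<xi> t s - difference_quotient \<xi> t' s\<bar> \<le> H * sqrt (t - t')"
  shows "\<bar>kernelK \<xi> t s - kernelK \<xi> t' s\<bar>
    \<le> (H * (1 + M\<^sup>2 * T / 2) + M ^ 3 * sqrt T / 4) * sqrt (t - t') / sqrt (t - s)
       + M * (1 / sqrt (t' - s) - 1 / sqrt (t - s))"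
proof -
  define p where "p = kernel_profile (difference_quotient \<xi> t s) (t - s)"
  define p' where "p' = kernel_profile (difference_quotient \<xi> t' s) (t' - s)"
  have "0 \<le> M" using q by linarith
  have "\<bar>p - p'\<bar> \<le> \<bar>difference_quotient \<xi> t s - difference_quotient \<xi> t' s\<bar> * (1 + M\<^sup>2 * T / 2)
      + M ^ 3 * (t - t') / 4"
    unfolding p_def p'_def using kernel_profile_diff_le[OF q q', of "t' - s" "t - s" T] assms by simp
  also have "\<dots> \<le> H * sqrt (t - t') * (1 + M\<^sup>2 * T / 2) + M ^ 3 * (sqrt T * sqrt (t - t')) / 4"
  proof (intro add_mono mult_right_mono divide_right_mono mult_left_mono)
    have "t - t' = sqrt (t - t') * sqrt (t - t')" using assms by simp
    also have "\<dots> \<le> sqrt T * sqrt (t - t')" using assms by (intro mult_right_mono) auto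
    finally show "t - t' \<le> sqrt T * sqrt (t - t')" .
  qed (use qq' \<open>0 \<le> M\<close> assms in auto)
  finally have p_diff: "\<bar>p - p'\<bar> \<le> (H * (1 + M\<^sup>2 * T / 2) + M ^ 3 * sqrt T / 4) * sqrt (t - t')"
    by (simp add: algebra_simps)
  have "\<bar>p'\<bar> \<le> M"
    unfolding p'_def using order_trans[OF abs_kernel_profile_le q'] assms by simp
  have "1 / sqrt (t - s) \<le> 1 / sqrt (t' - s)"
    using assms by (intro divide_left_mono) auto
  have "kernelK \<xi> t s - kernelK \<xi> t' s = (p - p') / sqrt (t - s) - p' * (1 / sqrt (t' - s) - 1 / sqrt (t - s))"
    using assms by (simp add: kernelK_eq_kernel_profile p_def p'_def algebra_simps diff_divide_distrib)
  also have "\<bar>\<dots>\<bar> \<le> \<bar>p - p'\<bar> / sqrt (t - s) + \<bar>p'\<bar> * (1 / sqrt (t' - s) - 1 / sqrt (t - s))"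
    using \<open>1 / sqrt (t - s) \<le> 1 / sqrt (t' - s)\<close>
      abs_triangle_ineq4[of "(p - p') / sqrt (t - s)" "p' * (1 / sqrt (t' - s) - 1 / sqrt (t - s))"]
    using assms by (simp add: abs_mult abs_div)
  also have "\<dots> \<le> (H * (1 + M\<^sup>2 * T / 2) + M ^ 3 * sqrt T / 4) * sqrt (t - t') / sqrt (t - s)
       + M * (1 / sqrt (t' - s) - 1 / sqrt (t - s))"
  proof (rule add_mono)
    show "\<bar>p - p'\<bar> / sqrt (t - s) \<le> (H * (1 + M\<^sup>2 * T / 2) + M ^ 3 * sqrt T / 4) * sqrt (t - t') / sqrt (t - s)"
      using p_diff by (rule divide_right_mono) (use assms in simp)
    show "\<bar>p'\<bar> * (1 / sqrt (t' - s) - 1 / sqrt (t - s)) \<le> M * (1 / sqrt (t' - s) - 1 / sqrt (t - s))"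
      using \<open>\<bar>p'\<bar> \<le> M\<close> by (rule mult_right_mono) (use \<open>1 / sqrt (t - s) \<le> 1 / sqrt (t' - s)\<close> in simp)
  qed
  finally show ?thesis .
qed

section \<open>Weakly singular kernels\<close>

lemma has_integral_inverse_sqrt:
  assumes "a \<le> b" "b \<le> t"
  shows "((\<lambda>s. 1 / sqrt (t - s)) has_integral (2 * sqrt (t - a) - 2 * sqrt (t - b))) {a..b}"
proof -
  have "((\<lambda>s. 1 / sqrt (t - s)) has_integral ((\<lambda>s. - 2 * sqrt (t - s)) b - (\<lambda>s. - 2 * sqrt (t - s)) a)) {a..b}"
  proof (rule fundamental_theorem_of_calculus_interior)
    show "continuous_on {a..b} (\<lambda>s. - 2 * sqrt (t - s))"
      by (intro continuous_intros)
    fix x assume "x \<in> {a<..<b}"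
    then have "0 < t - x" using assms by auto
    have inner: "((\<lambda>s. t - s) has_real_derivative (0 - 1)) (at x)"
      by (intro derivative_intros)
    have "((\<lambda>s. - 2 * sqrt (t - s)) has_real_derivative (- 2 * (inverse (sqrt (t - x)) / 2 * (0 - 1)))) (at x)"
      by (intro DERIV_cmult DERIV_chain2[OF DERIV_real_sqrt[OF \<open>0 < t - x\<close>] inner])
    then show "((\<lambda>s. - 2 * sqrt (t - s)) has_vector_derivative 1 / sqrt (t - x)) (at x)"
      by (simp add: has_real_derivative_iff_has_vector_derivative field_simps)
  qed fact
  then show ?thesis by simp
qed

text \<open>The dominating function may be improperly integrable at b, so the bound is only
  required on [a, b); F is then integrable by measurability plus domination.\<close>
lemma integrable_abs_integral_le_of_dominated:
  fixes F G :: "real \<Rightarrow> real"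
  assumes "a \<le> b" and F: "continuous_on {a..<b} F"
    and FG: "\<And>s. s \<in> {a..<b} \<Longrightarrow> \<bar>F s\<bar> \<le> G s" and G: "(G has_integral I) {a..b}"
  shows "F integrable_on {a..b} \<and> \<bar>integral {a..b} F\<bar> \<le> I"
proof -
  have half_open: "(H has_integral J) {a..<b} \<longleftrightarrow> (H has_integral J) {a..b}" for H :: "real \<Rightarrow> real" and J
    by (rule has_integral_spike_set_eq; rule negligible_subset[OF negligible_sing[of b]]; auto)
  have G': "(G has_integral I) {a..<b}" using G half_open by blast
  have L: "{a..<b} \<in> sets lebesgue" by simp
  have F_meas: "F \<in> borel_measurable (lebesgue_on {a..<b})"
    by (rule continuous_imp_measurable_on_sets_lebesgue[OF F L])
  have "F integrable_on {a..<b}"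
    by (rule measurable_bounded_by_integrable_imp_integrable_real[OF F_meas _ FG L]) (use G' in blast)
  then have "(F has_integral (integral {a..<b} F)) {a..b}" using half_open by blast
  moreover have "norm (integral {a..<b} F) \<le> I"
    by (rule integral_norm_bound_integral'[OF _ F_meas L G']) (use FG in auto)
  ultimately show ?thesis by (auto simp: integral_unique)
qed

lemma integral_inverse_sqrt_dominated:
  fixes F :: "real \<Rightarrow> real"
  assumes "a \<le> t" "continuous_on {a..<t} F" "\<And>s. a \<le> s \<Longrightarrow> s < t \<Longrightarrow> \<bar>F s\<bar> \<le> A / sqrt (t - s)"
  shows "F integrable_on {a..t} \<and> \<bar>integral {a..t} F\<bar> \<le> 2 * A * sqrt (t - a)"
proof -
  have "((\<lambda>s. A * (1 / sqrt (t - s))) has_integral A * (2 * sqrt (t - a) - 2 * sqrt (t - t))) {a..t}"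
    using assms(1) by (intro has_integral_mult_right has_integral_inverse_sqrt) auto
  then have "F integrable_on {a..t} \<and> \<bar>integral {a..t} F\<bar> \<le> A * (2 * sqrt (t - a) - 2 * sqrt (t - t))"
    using assms by (intro integrable_abs_integral_le_of_dominated) auto
  then show ?thesis by simp
qed

locale weakly_singular_kernel =
  fixes k :: "real \<Rightarrow> real \<Rightarrow> real" and T A L :: real
  assumes continuous: "\<And>t. t \<in> {0..T} \<Longrightarrow> continuous_on {0..<t} (k t)"
    and bound: "\<And>s t. 0 \<le> s \<Longrightarrow> s < t \<Longrightarrow> t \<le> T \<Longrightarrow> \<bar>k t s\<bar> \<le> A / sqrt (t - s)"
    and diff_bound: "\<And>s t' t. 0 \<le> s \<Longrightarrow> s < t' \<Longrightarrow> t' < t \<Longrightarrow> t \<le> T \<Longrightarrow>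
      \<bar>k t s - k t' s\<bar> \<le> L * sqrt (t - t') / sqrt (t - s) + A * (1 / sqrt (t' - s) - 1 / sqrt (t - s))"
    and nonneg: "0 \<le> A" "0 \<le> L"
begin

lemma integrable_abs_integral_le:
  assumes "0 \<le> a" "a \<le> t" "t \<le> T"
  shows "k t integrable_on {a..t} \<and> \<bar>integral {a..t} (k t)\<bar> \<le> 2 * A * sqrt (t - a)"
proof (rule integral_inverse_sqrt_dominated)
  show "continuous_on {a..<t} (k t)"
    using continuous[of t] assms by (auto elim: continuous_on_subset)
qed (use assms bound in auto)

lemma integral_increment_le:
  assumes "0 \<le> t'" "t' < t" "t \<le> T"
  shows "\<bar>integral {0..t} (k t) - integral {0..t'} (k t')\<bar> \<le> (4 * A + 2 * L * sqrt T) * sqrt (t - t')"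
proof -
  define \<delta> where "\<delta> = sqrt (t - t')"
  have "0 \<le> \<delta>" using assms by (simp add: \<delta>_def)
  have int_t: "k t integrable_on {0..t}"
    using integrable_abs_integral_le[of 0 t] assms by simp
  have int_t': "k t' integrable_on {0..t'}"
    using integrable_abs_integral_le[of 0 t'] assms by simp
  have "integral {0..t} (k t) = integral {0..t'} (k t) + integral {t'..t} (k t)"
    using Henstock_Kurzweil_Integration.integral_combine[where a = 0 and c = t' and b = t and f = "k t"]
      int_t assms by auto
  moreover have near: "\<bar>integral {t'..t} (k t)\<bar> \<le> 2 * A * \<delta>"
    using integrable_abs_integral_le[of t' t] assms by (simp add: \<delta>_def)
  moreover have "integral {0..t'} (k t) - integral {0..t'} (k t') = integral {0..t'} (\<lambda>s. k t s - k t' s)"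
    using int_t assms by (intro integral_diff[symmetric] int_t' integrable_on_subinterval[OF int_t]) auto
  moreover have "\<bar>integral {0..t'} (\<lambda>s. k t s - k t' s)\<bar>
      \<le> L * \<delta> * (2 * sqrt t - 2 * \<delta>) + A * (2 * sqrt t' - (2 * sqrt t - 2 * \<delta>))"
  proof (rule integrable_abs_integral_le_of_dominated[THEN conjunct2])
    show "continuous_on {0..<t'} (\<lambda>s. k t s - k t' s)"
      using continuous[of t] continuous[of t'] assms
      by (intro continuous_on_diff) (auto elim: continuous_on_subset)
    show "\<bar>k t s - k t' s\<bar> \<le> L * \<delta> * (1 / sqrt (t - s)) + A * (1 / sqrt (t' - s) - 1 / sqrt (t - s))"
      if "s \<in> {0..<t'}" for s
      using diff_bound[of s t' t] that assms by (simp add: \<delta>_def)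
    show "((\<lambda>s. L * \<delta> * (1 / sqrt (t - s)) + A * (1 / sqrt (t' - s) - 1 / sqrt (t - s))) has_integral
        L * \<delta> * (2 * sqrt t - 2 * \<delta>) + A * (2 * sqrt t' - (2 * sqrt t - 2 * \<delta>))) {0..t'}"
      using has_integral_inverse_sqrt[of 0 t' t] has_integral_inverse_sqrt[of 0 t' t'] assms
      by (intro has_integral_add has_integral_mult_right has_integral_diff) (auto simp: \<delta>_def)
  qed (use assms in auto)
  moreover have "L * \<delta> * (2 * sqrt t - 2 * \<delta>) \<le> L * \<delta> * (2 * sqrt T)"
  proof (rule mult_left_mono)
    show "2 * sqrt t - 2 * \<delta> \<le> 2 * sqrt T"
      using assms \<open>0 \<le> \<delta>\<close> real_sqrt_le_mono[of t T] by linarith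
  qed (use nonneg \<open>0 \<le> \<delta>\<close> in simp)
  moreover have "A * (2 * sqrt t' - (2 * sqrt t - 2 * \<delta>)) \<le> A * (2 * \<delta>)"
    using assms nonneg by (intro mult_left_mono) auto
  ultimately show ?thesis
    unfolding \<delta>_def[symmetric] by (simp add: algebra_simps)
qed

lemma integral_holder_half:
  shows "(\<forall>t\<in>{0..T}. k t integrable_on {0..t}) \<and> holder_on (1/2) {0..T} (\<lambda>t. integral {0..t} (k t))"
proof
  show "\<forall>t\<in>{0..T}. k t integrable_on {0..t}"
    using integrable_abs_integral_le[of 0] by auto
  show "holder_on (1/2) {0..T} (\<lambda>t. integral {0..t} (k t))"
    using integral_increment_le by (intro holder_onI_ordered) (auto simp: powr_half_sqrt)
qed

lemma mult_bounded:
  assumes "continuous_on {0..T} g" "\<And>s. s \<in> {0..T} \<Longrightarrow> \<bar>g s\<bar> \<le> B" "0 \<le> B"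
  shows "weakly_singular_kernel (\<lambda>t s. k t s * g s) T (A * B) (L * B)"
proof
  show "continuous_on {0..<t} (\<lambda>s. k t s * g s)" if "t \<in> {0..T}" for t
    using continuous[OF that] assms(1) that by (intro continuous_on_mult) (auto elim: continuous_on_subset)
  show "\<bar>k t s * g s\<bar> \<le> A * B / sqrt (t - s)" if "0 \<le> s" "s < t" "t \<le> T" for s t
  proof -
    have "\<bar>k t s * g s\<bar> = \<bar>k t s\<bar> * \<bar>g s\<bar>"
      by (simp add: abs_mult)
    also have "\<dots> \<le> A / sqrt (t - s) * B"
      using bound[OF that] assms(2)[of s] that nonneg by (intro mult_mono) auto
    finally show ?thesis by simp
  qed
  show "\<bar>k t s * g s - k t' s * g s\<bar>
      \<le> L * B * sqrt (t - t') / sqrt (t - s) + A * B * (1 / sqrt (t' - s) - 1 / sqrt (t - s))"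
    if "0 \<le> s" "s < t'" "t' < t" "t \<le> T" for s t' t
  proof -
    have "\<bar>k t s * g s - k t' s * g s\<bar> = \<bar>k t s - k t' s\<bar> * \<bar>g s\<bar>"
      by (simp add: abs_mult flip: left_diff_distrib)
    also have "\<dots> \<le> (L * sqrt (t - t') / sqrt (t - s) + A * (1 / sqrt (t' - s) - 1 / sqrt (t - s))) * B"
      using diff_bound[OF that] assms(2)[of s] that by (intro mult_mono) auto
    finally show ?thesis by (simp add: algebra_simps)
  qed
  show "0 \<le> A * B" "0 \<le> L * B"
    using nonneg \<open>0 \<le> B\<close> by simp_all
qed

end

lemma continuous_on_kernelK:
  assumes "continuous_on {a..<t} \<xi>"
  shows "continuous_on {a..<t} (kernelK \<xi> t)"
proof -
  have "continuous_on {a..<t} (\<lambda>s. (\<xi> t - \<xi> s) / (t - s) * (exp (- ((\<xi> t - \<xi> s)\<^sup>2 / (4 * (t - s)))) / sqrt (t - s)))"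
    by (intro continuous_intros assms) auto
  then show ?thesis
    by (rule continuous_on_cong[THEN iffD1, rotated 2]) (auto simp: kernelK_def powr_half_sqrt)
qed

lemma weakly_singular_kernel_kernelK:
  assumes deriv: "\<And>x. x \<in> {0..T} \<Longrightarrow> (\<xi> has_real_derivative \<xi>' x) (at x within {0..T})"
    and bounded: "\<And>x. x \<in> {0..T} \<Longrightarrow> \<bar>\<xi>' x\<bar> \<le> M"
    and holder: "\<And>x y. x \<in> {0..T} \<Longrightarrow> y \<in> {0..T} \<Longrightarrow> \<bar>\<xi>' x - \<xi>' y\<bar> \<le> H * sqrt \<bar>x - y\<bar>"
    and "0 \<le> T" "0 \<le> M" "0 \<le> H"
  shows "weakly_singular_kernel (kernelK \<xi>) T M (H * (1 + M\<^sup>2 * T / 2) + M ^ 3 * sqrt T / 4)"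
proof
  show "continuous_on {0..<t} (kernelK \<xi> t)" if "t \<in> {0..T}" for t
    using DERIV_continuous_on[OF deriv] that
    by (intro continuous_on_kernelK) (auto elim: continuous_on_subset)
  show "\<bar>kernelK \<xi> t s\<bar> \<le> M / sqrt (t - s)" if "0 \<le> s" "s < t" "t \<le> T" for s t
    using abs_difference_quotient_le[OF deriv bounded that] that by (intro abs_kernelK_le)
  show "\<bar>kernelK \<xi> t s - kernelK \<xi> t' s\<bar>
      \<le> (H * (1 + M\<^sup>2 * T / 2) + M ^ 3 * sqrt T / 4) * sqrt (t - t') / sqrt (t - s)
         + M * (1 / sqrt (t' - s) - 1 / sqrt (t - s))"
    if "0 \<le> s" "s < t'" "t' < t" "t \<le> T" for s t' t
    using that abs_difference_quotient_le[OF deriv bounded, of s t] abs_difference_quotient_le[OF deriv bounded, of s t']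
      difference_quotient_holder[OF deriv holder \<open>0 \<le> H\<close>, of s t' t]
    by (intro abs_kernelK_diff_le) auto
  show "0 \<le> M" by fact
  show "0 \<le> H * (1 + M\<^sup>2 * T / 2) + M ^ 3 * sqrt T / 4"
    using \<open>0 \<le> T\<close> \<open>0 \<le> M\<close> \<open>0 \<le> H\<close> by simp
qed

theorem lemma3p14:
  fixes T \<beta> :: real and \<xi> f :: "real \<Rightarrow> real"
  assumes "T > 0"
    and "\<beta> > 1/2"
    and "C1_holder_on \<beta> {0..T} \<xi>"
    and "holder_on (1/2) {0..T} f"
  shows "(\<forall>t\<in>{0..T}. (\<lambda>s. kernelK \<xi> t s * f s) integrable_on {0..t}) \<and>
    holder_on (1/2) {0..T} (\<lambda>t. integral {0..t} (\<lambda>s. kernelK \<xi> t s * f s))"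
proof -
  obtain \<xi>' where deriv: "\<And>t. t \<in> {0..T} \<Longrightarrow> (\<xi> has_real_derivative \<xi>' t) (at t within {0..T})"
    and "holder_on \<beta> {0..T} \<xi>'"
    using assms(3) unfolding C1_holder_on_def by blast
  have holder_half: "holder_on (1/2) {0..T} \<xi>'"
    by (rule holder_on_exponent_mono[OF \<open>holder_on \<beta> {0..T} \<xi>'\<close>]) (use assms(2) in auto)
  then obtain H where "0 \<le> H"
    and H: "\<And>x y. x \<in> {0..T} \<Longrightarrow> y \<in> {0..T} \<Longrightarrow> \<bar>\<xi>' x - \<xi>' y\<bar> \<le> H * sqrt \<bar>x - y\<bar>"
    by (auto simp: holder_on_nonneg_constant powr_half_sqrt)
  obtain M where M: "\<And>x. x \<in> {0..T} \<Longrightarrow> \<bar>\<xi>' x\<bar> \<le> M"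
    using holder_on_bounded[OF holder_half, of 0 T 0] assms(1) by auto
  obtain B where B: "\<And>x. x \<in> {0..T} \<Longrightarrow> \<bar>f x\<bar> \<le> B"
    using holder_on_bounded[OF assms(4), of 0 T 0] assms(1) by auto
  have "0 \<le> M" "0 \<le> B"
    using M[of 0] B[of 0] assms(1) by auto
  have "weakly_singular_kernel (kernelK \<xi>) T M (H * (1 + M\<^sup>2 * T / 2) + M ^ 3 * sqrt T / 4)"
    using assms(1) \<open>0 \<le> M\<close> \<open>0 \<le> H\<close> by (intro weakly_singular_kernel_kernelK[OF deriv M H]) auto
  then have "weakly_singular_kernel (\<lambda>t s. kernelK \<xi> t s * f s) T (M * B)
      ((H * (1 + M\<^sup>2 * T / 2) + M ^ 3 * sqrt T / 4) * B)"
    by (rule weakly_singular_kernel.mult_bounded)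
      (use holder_on_imp_continuous_on[OF _ assms(4)] B \<open>0 \<le> B\<close> in auto)
  then show ?thesis
    by (rule weakly_singular_kernel.integral_holder_half)
qed

end
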